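(* Let $\lambda_0>0$, let the loss $l(\theta;y)$ be two-times differentiable (w.r.t. $\theta$) and convex, and let $f(\gamma;y)=m(\gamma;y)-\gamma$ with $m(\gamma;y):=\arg\min_\theta\big(l(\theta;y)+\tfrac12(\gamma-\theta)\mathcal V^\star(\gamma-\theta)^\top\big)$. Suppose there exist $K\times K$ matrices $\mathcal C^\star$, $\mathcal B^\star$ and $\mathcal V^\star>\mathbf 0$ satisfying \begin{align*} \mathcal V^\star&=\lambda_0\mathcal I-\alpha\mathbb E[f'(\Gamma^\star;Y)]\mathcal V^\star,\\ \mathcal B^\star&=\tfrac{\alpha}{\lambda_0}\mathbb E[G_0^\top f(\Gamma^\star;Y)]\mathcal V^\star,\\ \mathcal C^\star&=\alpha\mathbb E[f(\Gamma^\star;Y)^\top f(\Gamma^\star;Y)], \end{align*} with $\Gamma^\star=G_0\mathcal B^\star+G\sqrt{\mathcal C^\star}$. Then $\rho_{\rm AT}:=\rho\big(\alpha\,\mathbb E[f'(\Gamma^\star;Y)\otimes f'(\Gamma^\star;Y)]\big)<1$.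
   Context: $\alpha>0$ fixed; $G\sim\mathcal N(\mathbf 0,\mathcal I)$ ($1\times K$) independent of $(Y,G_0)$, where $G_0\sim\mathcal N(\mathbf 0,\mathcal I)$ and $Y\mid G_0\sim p_0(Y\mid G_0\sqrt{\mathcal C_0})$ for a generating likelihood $p_0$ and fixed $\mathcal C_0\ge0$. $f'(\gamma;y)$ is the $K\times K$ Jacobian w.r.t. $\gamma$ ($[f']_{kk'}=\partial f_{k'}/\partial\gamma_k$), which equals $-l''(m(\gamma;y);y)(\mathcal V^\star+l''(m(\gamma;y);y))^{-1}$; $\rho(\cdot)$ is the spectral radius, $\otimes$ the Kronecker product. *)

theory Defs
  imports "HOL-Probability.Probability"
begin

text \<open>Row vectors of length K are modelled as real^'k (index type 'k finite, K = CARD('k)),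
  K x K matrices as real^'k^'k with A $ i $ j the (i,j) entry.  A row vector x times a
  matrix A is x v* A.\<close>

definition outer :: "real^'k \<Rightarrow> real^'k \<Rightarrow> real^'k^'k" where
  "outer x y = (\<chi> i j. x $ i * y $ j)"   \<comment> \<open>x^T y for row vectors x, y\<close>

definition kron :: "real^'k^'k \<Rightarrow> real^'k^'k \<Rightarrow> real^('k \<times> 'k)^('k \<times> 'k)" where
  "kron A B = (\<chi> p q. A $ fst p $ fst q * B $ snd p $ snd q)"

definition psd :: "real^'k^'k \<Rightarrow> bool" where
  "psd S \<longleftrightarrow> transpose S = S \<and> (\<forall>x. 0 \<le> x \<bullet> (S *v x))"

definition pos_def :: "real^'k^'k \<Rightarrow> bool" where
  "pos_def S \<longleftrightarrow> transpose S = S \<and> (\<forall>x. x \<noteq> 0 \<longrightarrow> 0 < x \<bullet> (S *v x))"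

definition mat_sqrt :: "real^'k^'k \<Rightarrow> real^'k^'k" where
  "mat_sqrt C = (THE S. psd S \<and> S ** S = C)"

definition spec_rad :: "real^'n^'n \<Rightarrow> real" where
  "spec_rad A = Max {cmod z | z. \<exists>v :: complex^'n. v \<noteq> 0 \<and>
      (\<chi> i j. complex_of_real (A $ i $ j)) *v v = z *s v}"

definition prox_m :: "(real^'k \<Rightarrow> 'y \<Rightarrow> real) \<Rightarrow> real^'k^'k \<Rightarrow> real^'k \<Rightarrow> 'y \<Rightarrow> real^'k" where
  "prox_m l V \<gamma> y = arg_min (\<lambda>\<theta>. l \<theta> y + 1/2 * (((\<gamma> - \<theta>) v* V) \<bullet> (\<gamma> - \<theta>))) (\<lambda>_. True)"

definition f_fun :: "(real^'k \<Rightarrow> 'y \<Rightarrow> real) \<Rightarrow> real^'k^'k \<Rightarrow> real^'k \<Rightarrow> 'y \<Rightarrow> real^'k" where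
  "f_fun l V \<gamma> y = prox_m l V \<gamma> y - \<gamma>"

text \<open>Jacobian in the paper's convention [f']_{k k'} = d f_{k'} / d gamma_k, i.e. the transpose
  of the library's (column convention) jacobian, so that f(gamma+h) ~ f(gamma) + h v* f'.\<close>
definition f_jac :: "(real^'k \<Rightarrow> 'y \<Rightarrow> real) \<Rightarrow> real^'k^'k \<Rightarrow> real^'k \<Rightarrow> 'y \<Rightarrow> real^'k^'k" where
  "f_jac l V \<gamma> y = transpose (jacobian (\<lambda>g. f_fun l V g y) (at \<gamma>))"

definition std_gauss_vec :: "'a measure \<Rightarrow> ('a \<Rightarrow> real^'k) \<Rightarrow> bool" where
  "std_gauss_vec M X \<longleftrightarrow> X \<in> borel_measurable M \<and>
     prob_space.indep_vars M (\<lambda>_. borel) (\<lambda>i \<omega>. X \<omega> $ i) UNIV \<and>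
     (\<forall>i. distributed M lborel (\<lambda>\<omega>. X \<omega> $ i) std_normal_density)"

end

(*
  Write q x = x V x^T.  The proximal map m of a convex loss in the V-metric is firmly
  nonexpansive, so its derivative D satisfies (h D) V (h D)^T <= (h D) V h^T; since
  f' = D - I this reads q (h f') <= -(h f') V h^T.  Taking expectations in the fixed point
  equation for V gives alpha E[q (h f')] <= q h - lambda0 |h|^2 <= c q h with c < 1.
  On K x K matrices, alpha E[f' (x) f'] acts as R |-> alpha E[f' R f'^T], so it shrinks the
  q-norm of bilinear forms by the factor c, and all its eigenvalues lie in the unit disc.
*)

theory Submission
  imports Defs "Jordan_Normal_Form.Spectral_Radius"
begin

hide_const (open) Matrix.mat Matrix.vec
no_notation Matrix.vec_index (infixl "$" 100)
no_notation Matrix.scalar_prod (infix "\<bullet>" 70)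

lemma inner_matrix_vector_symmetric:
  fixes x y :: "real^'n"
  assumes "transpose A = A"
  shows "x \<bullet> (A *v y) = y \<bullet> (A *v x)"
  by (metis assms dot_lmul_matrix inner_commute vector_transpose_matrix)

lemma pos_def_quadratic_lower_bound:
  fixes V :: "real^'k^'k"
  assumes "pos_def V"
  obtains \<mu> where "\<mu> > 0" "\<And>x. \<mu> * (norm x)\<^sup>2 \<le> x \<bullet> (V *v x)"
proof -
  have "continuous_on (sphere 0 1) (\<lambda>x::real^'k. x \<bullet> (V *v x))"
    by (intro continuous_intros linear_continuous_on matrix_vector_mul_bounded_linear)
  moreover have "sphere (0::real^'k) 1 \<noteq> {}" by simp
  ultimately obtain x0 where x0: "x0 \<in> sphere 0 1"
    and min: "\<And>x. x \<in> sphere 0 1 \<Longrightarrow> x0 \<bullet> (V *v x0) \<le> x \<bullet> (V *v x)"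
    using continuous_attains_inf[OF compact_sphere] by blast
  define \<mu> where "\<mu> = x0 \<bullet> (V *v x0)"
  have "x0 \<noteq> 0" using x0 by auto
  then have "\<mu> > 0" using assms by (simp add: pos_def_def \<mu>_def)
  moreover have "\<mu> * (norm x)\<^sup>2 \<le> x \<bullet> (V *v x)" for x
  proof (cases "x = 0")
    case False
    have "\<mu> \<le> (x /\<^sub>R norm x) \<bullet> (V *v (x /\<^sub>R norm x))"
      using min[of "x /\<^sub>R norm x"] False by (simp add: \<mu>_def)
    also have "\<dots> = (x \<bullet> (V *v x)) / (norm x)\<^sup>2"
      by (simp add: matrix_vector_mult_scaleR power2_eq_square divide_inverse)
    finally show ?thesis using False by (simp add: pos_le_divide_eq mult.commute)
  qed simp
  ultimately show thesis by (rule that)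
qed

lemma quadratic_form_upper_bound:
  fixes V :: "real^'k^'k"
  obtains B where "B > 0" "\<And>x. x \<bullet> (V *v x) \<le> B * (norm x)\<^sup>2"
proof -
  obtain B where B: "B > 0" "\<And>x. norm (V *v x) \<le> norm x * B"
    using bounded_linear.pos_bounded[OF matrix_vector_mul_bounded_linear[of V]] by blast
  have "x \<bullet> (V *v x) \<le> B * (norm x)\<^sup>2" for x
  proof -
    have "x \<bullet> (V *v x) \<le> norm x * norm (V *v x)" by (rule norm_cauchy_schwarz)
    also have "\<dots> \<le> norm x * (norm x * B)" using B(2) by (simp add: mult_left_mono)
    finally show ?thesis by (simp add: power2_eq_square mult_ac)
  qed
  with B(1) show thesis by (rule that)
qed

lemma pos_def_invertible:
  fixes V :: "real^'k^'k"
  assumes "pos_def V"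
  shows "invertible V"
proof -
  have "V *v x = 0 \<Longrightarrow> x = 0" for x
    using assms by (force simp: pos_def_def)
  then obtain W where "W ** V = mat 1" using matrix_left_invertible_ker by blast
  then show ?thesis by (metis invertible_def matrix_left_right_inverse)
qed

lemma has_derivative_difference_quotient:
  fixes F :: "'a::real_normed_vector \<Rightarrow> 'b::real_normed_vector"
  assumes "(F has_derivative F') (at x)"
  shows "((\<lambda>t. (F (x + t *\<^sub>R u) - F x) /\<^sub>R t) \<longlongrightarrow> F' u) (at_right 0)"
proof -
  interpret F': bounded_linear F' using assms by (rule has_derivative_bounded_linear)
  have "((\<lambda>t. x + t *\<^sub>R u) has_derivative (\<lambda>t. t *\<^sub>R u)) (at 0 within {0<..})"
    by (auto intro!: derivative_eq_intros)
  moreover have "(F has_derivative F') (at (x + 0 *\<^sub>R u) within (\<lambda>t. x + t *\<^sub>R u) ` {0<..})"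
    using assms by (simp add: has_derivative_at_withinI)
  ultimately have "((\<lambda>t. F (x + t *\<^sub>R u)) has_derivative (\<lambda>t. t *\<^sub>R F' u)) (at 0 within {0<..})"
    using has_derivative_in_compose by (fastforce simp: F'.scaleR)
  then have "((\<lambda>t. (F (x + t *\<^sub>R u) - F x - t *\<^sub>R F' u) /\<^sub>R norm t) \<longlongrightarrow> 0) (at_right 0)"
    by (simp add: has_derivative_at_within)
  from tendsto_add[OF this tendsto_const, of "F' u"]
  have "((\<lambda>t. (F (x + t *\<^sub>R u) - F x - t *\<^sub>R F' u) /\<^sub>R norm t + F' u) \<longlongrightarrow> F' u) (at_right 0)"
    by simp
  moreover have "\<forall>\<^sub>F t in at_right 0.
      (F (x + t *\<^sub>R u) - F x - t *\<^sub>R F' u) /\<^sub>R norm t + F' u = (F (x + t *\<^sub>R u) - F x) /\<^sub>R t"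
    by (rule eventually_at_rightI[of 0 1]) (auto simp: scaleR_right_diff_distrib)
  ultimately show ?thesis by (rule Lim_transform_eventually)
qed

lemma convex_on_gradient_inequality:
  fixes L :: "'a::real_inner \<Rightarrow> real"
  assumes "convex_on UNIV L" and "(L has_derivative (\<lambda>h. h \<bullet> d)) (at a)"
  shows "L a + (b - a) \<bullet> d \<le> L b"
proof -
  have "((\<lambda>t. (L (a + t *\<^sub>R (b - a)) - L a) /\<^sub>R t) \<longlongrightarrow> (b - a) \<bullet> d) (at_right 0)"
    using has_derivative_difference_quotient[OF assms(2)] .
  moreover have "\<forall>\<^sub>F t in at_right 0. (L (a + t *\<^sub>R (b - a)) - L a) /\<^sub>R t \<le> L b - L a"
  proof (rule eventually_at_rightI[of 0 1])
    fix t :: real assume t: "t \<in> {0<..<1}"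
    have "L (a + t *\<^sub>R (b - a)) = L ((1 - t) *\<^sub>R a + t *\<^sub>R b)"
      by (simp add: algebra_simps)
    also have "\<dots> \<le> (1 - t) * L a + t * L b"
      using convex_onD[OF assms(1)] t by simp
    finally have "L (a + t *\<^sub>R (b - a)) - L a \<le> t * (L b - L a)"
      by (simp add: algebra_simps)
    then show "(L (a + t *\<^sub>R (b - a)) - L a) /\<^sub>R t \<le> L b - L a"
      using t by (simp add: field_simps)
  qed simp
  ultimately have "(b - a) \<bullet> d \<le> L b - L a"
    by (rule tendsto_upperbound) simp
  then show ?thesis by simp
qed

lemma convex_on_gradient_monotone:
  fixes L :: "'a::real_inner \<Rightarrow> real"
  assumes "convex_on UNIV L" and "\<And>x. (L has_derivative (\<lambda>h. h \<bullet> g x)) (at x)"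
  shows "0 \<le> (g b - g a) \<bullet> (b - a)"
  using convex_on_gradient_inequality[OF assms(1) assms(2), of a b]
    convex_on_gradient_inequality[OF assms(1) assms(2), of b a]
  by (simp add: algebra_simps inner_diff_left inner_diff_right inner_commute)

lemma has_derivative_monotone_nonneg:
  fixes g :: "'a::real_inner \<Rightarrow> 'a"
  assumes mono: "\<And>a b. 0 \<le> (g b - g a) \<bullet> (b - a)" and "(g has_derivative g') (at x)"
  shows "0 \<le> g' h \<bullet> h"
proof -
  have "((\<lambda>t. ((g (x + t *\<^sub>R h) - g x) /\<^sub>R t) \<bullet> h) \<longlongrightarrow> g' h \<bullet> h) (at_right 0)"
    by (intro tendsto_inner has_derivative_difference_quotient[OF assms(2)] tendsto_const)
  moreover have "\<forall>\<^sub>F t in at_right 0. 0 \<le> ((g (x + t *\<^sub>R h) - g x) /\<^sub>R t) \<bullet> h"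
  proof (rule eventually_at_rightI[of 0 1])
    fix t :: real assume t: "t \<in> {0<..<1}"
    have "0 \<le> (g (x + t *\<^sub>R h) - g x) \<bullet> ((x + t *\<^sub>R h) - x)"
      by (rule mono)
    then have "0 \<le> t * ((g (x + t *\<^sub>R h) - g x) \<bullet> h)"
      by (simp only: add_diff_cancel_left' inner_scaleR_right)
    then show "0 \<le> ((g (x + t *\<^sub>R h) - g x) /\<^sub>R t) \<bullet> h"
      using t by (simp add: zero_le_mult_iff)
  qed simp
  ultimately show ?thesis by (rule tendsto_lowerbound) simp
qed

lemma continuous_attains_global_min:
  fixes f :: "'a::heine_borel \<Rightarrow> real"
  assumes "continuous_on UNIV f" and "\<And>x. r < dist c x \<Longrightarrow> f c < f x"
  shows "\<exists>x. \<forall>y. f x \<le> f y"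
proof -
  have "c \<in> cball c r" using assms(2)[of c] by force
  then obtain x where min: "\<And>y. y \<in> cball c r \<Longrightarrow> f x \<le> f y"
    using continuous_attains_inf[OF compact_cball, of c r f] continuous_on_subset[OF assms(1)]
    by blast
  have "f x \<le> f y" for y
    using min[of y] min[OF \<open>c \<in> cball c r\<close>] assms(2)[of y] by (cases "y \<in> cball c r") auto
  then show ?thesis by blast
qed

context
  fixes l :: "real^'k \<Rightarrow> 'y \<Rightarrow> real" and y :: 'y
    and g :: "real^'k \<Rightarrow> real^'k" and V :: "real^'k^'k"
  assumes convex: "convex_on UNIV (\<lambda>\<theta>. l \<theta> y)"
    and gradient: "\<And>\<theta>. ((\<lambda>\<theta>. l \<theta> y) has_derivative (\<lambda>h. h \<bullet> g \<theta>)) (at \<theta>)"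
    and gradient_differentiable: "\<And>\<theta>. g differentiable (at \<theta>)"
    and V_pos_def: "pos_def V"
begin

abbreviation prox_objective :: "real^'k \<Rightarrow> real^'k \<Rightarrow> real" where
  "prox_objective \<gamma> \<theta> \<equiv> l \<theta> y + 1/2 * (((\<gamma> - \<theta>) v* V) \<bullet> (\<gamma> - \<theta>))"

abbreviation prox :: "real^'k \<Rightarrow> real^'k" where
  "prox \<gamma> \<equiv> prox_m l V \<gamma> y"

lemma prox_objective_has_derivative:
  "(prox_objective \<gamma> has_derivative (\<lambda>h. h \<bullet> (g \<theta> - V *v (\<gamma> - \<theta>)))) (at \<theta>)"
proof -
  have diff: "((\<lambda>\<theta>. \<gamma> - \<theta>) has_derivative (\<lambda>h. - h)) (at \<theta>)"
    by (auto intro!: derivative_eq_intros)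
  have deriv: "((\<lambda>\<theta>. l \<theta> y + 1/2 * ((\<gamma> - \<theta>) \<bullet> (V *v (\<gamma> - \<theta>)))) has_derivative
      (\<lambda>h. h \<bullet> g \<theta> + 1/2 * ((\<gamma> - \<theta>) \<bullet> (V *v - h) + - h \<bullet> (V *v (\<gamma> - \<theta>))))) (at \<theta>)"
    by (intro has_derivative_add gradient has_derivative_mult_right has_derivative_inner diff
        bounded_linear.has_derivative[OF matrix_vector_mul_bounded_linear])
  have "(\<gamma> - \<theta>) \<bullet> (V *v - h) = - h \<bullet> (V *v (\<gamma> - \<theta>))" for h
    by (rule inner_matrix_vector_symmetric) (use V_pos_def in \<open>simp add: pos_def_def\<close>)
  then show ?thesis unfolding dot_lmul_matrix
    by (intro has_derivative_eq_rhs[OF deriv]) (simp add: fun_eq_iff inner_diff_right)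
qed

lemma prox_objective_attains_min: "\<exists>\<theta>. \<forall>\<theta>'. prox_objective \<gamma> \<theta> \<le> prox_objective \<gamma> \<theta>'"
proof -
  obtain \<mu> where \<mu>: "\<mu> > 0" "\<And>x. \<mu> * (norm x)\<^sup>2 \<le> x \<bullet> (V *v x)"
    using pos_def_quadratic_lower_bound[OF V_pos_def] by blast
  have "continuous_on UNIV (prox_objective \<gamma>)"
    using prox_objective_has_derivative
    by (intro continuous_at_imp_continuous_on ballI has_derivative_continuous) blast
  moreover have "prox_objective \<gamma> \<gamma> < prox_objective \<gamma> \<theta>"
    if far: "2 * norm (g \<gamma>) / \<mu> < dist \<gamma> \<theta>" for \<theta>
  proof -
    define d where "d = norm (\<gamma> - \<theta>)"
    have "0 \<le> 2 * norm (g \<gamma>) / \<mu>" using \<mu>(1) by simp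
    then have "0 < d" using far by (simp only: d_def dist_norm)
    moreover have "norm (g \<gamma>) < \<mu> / 2 * d" using far \<mu>(1) by (simp add: d_def dist_norm field_simps)
    ultimately have "d * norm (g \<gamma>) < d * (\<mu> / 2 * d)" by (rule mult_strict_left_mono[rotated])
    then have "d * norm (g \<gamma>) < \<mu> / 2 * d\<^sup>2" by (simp add: power2_eq_square mult_ac)
    moreover have "l \<gamma> y + (\<theta> - \<gamma>) \<bullet> g \<gamma> \<le> l \<theta> y"
      by (rule convex_on_gradient_inequality[OF convex gradient])
    moreover have "- (d * norm (g \<gamma>)) \<le> (\<theta> - \<gamma>) \<bullet> g \<gamma>"
      using Cauchy_Schwarz_ineq2[of "\<theta> - \<gamma>" "g \<gamma>"] by (simp add: d_def norm_minus_commute abs_le_iff)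
    moreover have "\<mu> * d\<^sup>2 \<le> (\<gamma> - \<theta>) \<bullet> (V *v (\<gamma> - \<theta>))"
      unfolding d_def by (rule \<mu>(2))
    ultimately show ?thesis by (simp add: dot_lmul_matrix)
  qed
  ultimately show ?thesis by (rule continuous_attains_global_min)
qed

lemma prox_m_minimizes: "prox_objective \<gamma> (prox \<gamma>) \<le> prox_objective \<gamma> \<theta>"
proof -
  obtain \<theta>0 where \<theta>0: "\<forall>\<theta>'. prox_objective \<gamma> \<theta>0 \<le> prox_objective \<gamma> \<theta>'"
    using prox_objective_attains_min by blast
  show ?thesis
    unfolding prox_m_def
    by (rule arg_minI[of "\<lambda>_. True" \<theta>0 "prox_objective \<gamma>"]) (use \<theta>0 in \<open>auto simp: not_less\<close>)
qed

lemma prox_m_stationary: "g (prox \<gamma>) = V *v (\<gamma> - prox \<gamma>)"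
proof -
  let ?r = "g (prox \<gamma>) - V *v (\<gamma> - prox \<gamma>)"
  have "(\<lambda>h. h \<bullet> ?r) = (\<lambda>h. 0)"
    using has_derivative_local_min[OF prox_objective_has_derivative] prox_m_minimizes
    by (simp add: always_eventually)
  then have "?r \<bullet> ?r = 0" by meson
  then show ?thesis by simp
qed

lemma prox_m_firmly_nonexpansive:
  "(prox a - prox b) \<bullet> (V *v (prox a - prox b)) \<le> (prox a - prox b) \<bullet> (V *v (a - b))"
proof -
  let ?d = "prox a - prox b"
  have "g (prox a) - g (prox b) = V *v ((a - b) - ?d)"
    by (simp add: prox_m_stationary matrix_vector_mult_diff_distrib algebra_simps)
  then have "0 \<le> ?d \<bullet> (V *v ((a - b) - ?d))"
    using convex_on_gradient_monotone[OF convex gradient, where a = "prox b" and b = "prox a"]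
    by (metis inner_commute)
  then show ?thesis
    by (simp only: matrix_vector_mult_diff_distrib inner_diff_right diff_ge_0_iff_ge)
qed

lemma continuous_on_prox_m: "continuous_on UNIV prox"
proof -
  obtain \<mu> where \<mu>: "\<mu> > 0" "\<And>x. \<mu> * (norm x)\<^sup>2 \<le> x \<bullet> (V *v x)"
    using pos_def_quadratic_lower_bound[OF V_pos_def] by blast
  obtain K where K: "K > 0" "\<And>x. norm (V *v x) \<le> norm x * K"
    using bounded_linear.pos_bounded[OF matrix_vector_mul_bounded_linear[of V]] by blast
  have "norm (prox a - prox b) \<le> K / \<mu> * norm (a - b)" for a b
  proof -
    define d where "d = prox a - prox b"
    have "\<mu> * (norm d)\<^sup>2 \<le> d \<bullet> (V *v (a - b))"
      using \<mu>(2)[of d] prox_m_firmly_nonexpansive[of a b] by (simp add: d_def)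
    also have "\<dots> \<le> norm d * (norm (a - b) * K)"
      using norm_cauchy_schwarz[of d] K(2)[of "a - b"] by (meson mult_left_mono norm_ge_zero order_trans)
    finally have "norm d * (\<mu> * norm d) \<le> norm d * (K * norm (a - b))"
      by (simp add: power2_eq_square mult_ac)
    then have "\<mu> * norm d \<le> K * norm (a - b)"
      using K(1) by (cases "d = 0") auto
    then show ?thesis using \<mu>(1) by (simp add: d_def field_simps)
  qed
  then have "(K / \<mu>)-lipschitz_on UNIV prox"
    by (auto simp: lipschitz_on_def dist_norm intro: less_imp_le divide_pos_pos K(1) \<mu>(1))
  then show ?thesis by (rule lipschitz_on_continuous_on)
qed

text \<open>The map \<open>\<theta> \<mapsto> \<theta> + V\<^sup>-\<^sup>1 g \<theta>\<close> is a left inverse of the proximal map; its derivative is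
  invertible because \<open>g\<close> is monotone, so the inverse function theorem applies.\<close>

lemma prox_m_differentiable: "prox differentiable (at \<gamma>)"
proof -
  obtain W where WV: "W ** V = mat 1" and VW: "V ** W = mat 1"
    using pos_def_invertible[OF V_pos_def] by (auto simp: invertible_def)
  define \<phi> where "\<phi> \<theta> = \<theta> + W *v g \<theta>" for \<theta>
  have \<phi>_prox: "\<phi> (prox z) = z" for z
    by (simp add: \<phi>_def prox_m_stationary matrix_vector_mul_assoc WV)
  obtain g' where g': "(g has_derivative g') (at (prox \<gamma>))"
    using gradient_differentiable by (auto simp: differentiable_def)
  define \<phi>' where "\<phi>' h = h + W *v g' h" for h
  have \<phi>': "(\<phi> has_derivative \<phi>') (at (prox \<gamma>))"
    unfolding \<phi>_def[abs_def] \<phi>'_def[abs_def]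
    by (intro has_derivative_add has_derivative_ident
        bounded_linear.has_derivative[OF matrix_vector_mul_bounded_linear g'])
  have "linear \<phi>'" using has_derivative_linear[OF \<phi>'] .
  moreover have "h = 0" if "\<phi>' h = 0" for h
  proof -
    have "V *v \<phi>' h = V *v h + g' h"
      by (simp add: \<phi>'_def matrix_vector_right_distrib matrix_vector_mul_assoc VW)
    then have "V *v h + g' h = 0" using that by simp
    then have "h \<bullet> (V *v h) + g' h \<bullet> h = 0"
      by (metis inner_add_right inner_commute inner_zero_right)
    moreover have "0 \<le> g' h \<bullet> h"
      by (rule has_derivative_monotone_nonneg[OF convex_on_gradient_monotone[OF convex gradient] g'])
    ultimately have "h \<bullet> (V *v h) \<le> 0" by linarith
    then show "h = 0" using V_pos_def by (auto simp: pos_def_def not_less[symmetric])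
  qed
  ultimately obtain \<psi> where \<psi>: "linear \<psi>" "\<psi> \<circ> \<phi>' = id"
    using linear_injective_0 linear_injective_left_inverse by metis
  have "(prox has_derivative \<psi>) (at \<gamma>)"
  proof (rule has_derivative_inverse_basic[where T = UNIV])
    show "isCont prox \<gamma>"
      using continuous_on_prox_m by (simp add: continuous_on_eq_continuous_at)
  qed (use \<phi>' \<psi> \<phi>_prox in \<open>auto simp: linear_conv_bounded_linear\<close>)
  then show ?thesis by (auto simp: differentiable_def)
qed

lemma prox_m_derivative_firmly_nonexpansive:
  assumes D: "(prox has_derivative D) (at \<gamma>)"
  shows "D u \<bullet> (V *v D u) \<le> D u \<bullet> (V *v u)"
proof -
  define dq where "dq t = (prox (\<gamma> + t *\<^sub>R u) - prox \<gamma>) /\<^sub>R t" for t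
  have "(dq \<longlongrightarrow> D u) (at_right 0)"
    unfolding dq_def by (rule has_derivative_difference_quotient[OF D])
  then have "((\<lambda>t. dq t \<bullet> (V *v u) - dq t \<bullet> (V *v dq t)) \<longlongrightarrow> D u \<bullet> (V *v u) - D u \<bullet> (V *v D u))
      (at_right 0)"
    by (intro tendsto_intros bounded_linear.tendsto[OF matrix_vector_mul_bounded_linear])
  moreover have "\<forall>\<^sub>F t in at_right 0. 0 \<le> dq t \<bullet> (V *v u) - dq t \<bullet> (V *v dq t)"
  proof (rule eventually_at_rightI[of 0 1])
    fix t :: real assume t: "t \<in> {0<..<1}"
    then have "prox (\<gamma> + t *\<^sub>R u) - prox \<gamma> = t *\<^sub>R dq t" by (simp add: dq_def)
    then have "(t *\<^sub>R dq t) \<bullet> (V *v (t *\<^sub>R dq t)) \<le> (t *\<^sub>R dq t) \<bullet> (V *v (t *\<^sub>R u))"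
      using prox_m_firmly_nonexpansive[of "\<gamma> + t *\<^sub>R u" \<gamma>] by simp
    then have "t\<^sup>2 * (dq t \<bullet> (V *v dq t)) \<le> t\<^sup>2 * (dq t \<bullet> (V *v u))"
      by (simp add: matrix_vector_mult_scaleR power2_eq_square mult.assoc)
    then show "0 \<le> dq t \<bullet> (V *v u) - dq t \<bullet> (V *v dq t)" using t by simp
  qed simp
  ultimately have "0 \<le> D u \<bullet> (V *v u) - D u \<bullet> (V *v D u)"
    by (rule tendsto_lowerbound) simp
  then show ?thesis by simp
qed

text \<open>With \<open>D\<close> the derivative of the proximal map, \<open>u v* f_jac = D u - u\<close>, and the
  inequality is a rearrangement of \<open>D u \<bullet> V D u \<le> D u \<bullet> V u\<close>.\<close>

lemma f_jac_quadratic_bound: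
  fixes \<gamma> u :: "real^'k"
  defines "J \<equiv> f_jac l V \<gamma> y"
  shows "(u v* J) \<bullet> (V *v (u v* J)) \<le> - ((u v* J) \<bullet> (V *v u))"
proof -
  obtain D where D: "(prox has_derivative D) (at \<gamma>)"
    using prox_m_differentiable by (auto simp: differentiable_def)
  have f: "((\<lambda>\<gamma>. f_fun l V \<gamma> y) has_derivative (\<lambda>h. D h - h)) (at \<gamma>)"
    unfolding f_fun_def by (intro has_derivative_diff D has_derivative_ident)
  have J: "u v* J = D u - u"
  proof -
    have "((\<lambda>\<gamma>. f_fun l V \<gamma> y) has_derivative (\<lambda>h. h v* J)) (at \<gamma>)"
      using jacobian_works[THEN iffD1, OF differentiableI[OF f]] by (simp add: J_def f_jac_def)
    from has_derivative_unique[OF this f] show ?thesis by meson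
  qed
  have "D u \<bullet> (V *v D u) \<le> D u \<bullet> (V *v u)"
    by (rule prox_m_derivative_firmly_nonexpansive[OF D])
  moreover have "u \<bullet> (V *v D u) = D u \<bullet> (V *v u)"
    by (rule inner_matrix_vector_symmetric) (use V_pos_def in \<open>simp add: pos_def_def\<close>)
  ultimately show ?thesis
    by (simp add: J matrix_vector_mult_diff_distrib inner_diff_left inner_diff_right)
qed

end

definition matricize :: "real^('k \<times> 'k) \<Rightarrow> real^'k^'k" where
  "matricize R = (\<chi> i j. R $ (i, j))"

definition vectorize :: "real^'k^'k \<Rightarrow> real^('k \<times> 'k)" where
  "vectorize A = (\<chi> p. A $ fst p $ snd p)"

definition vec_form :: "real^('k \<times> 'k) \<Rightarrow> real^'k \<Rightarrow> real^'k \<Rightarrow> real" where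
  "vec_form R x y = x \<bullet> (matricize R *v y)"

lemma matricize_vectorize [simp]: "matricize (vectorize A) = A"
  by (simp add: matricize_def vectorize_def Finite_Cartesian_Product.vec_eq_iff)

lemma matricize_add: "matricize (R + S) = matricize R + matricize S"
  by (simp add: matricize_def Finite_Cartesian_Product.vec_eq_iff)

lemma matricize_scaleR: "matricize (c *\<^sub>R R) = c *\<^sub>R matricize R"
  by (simp add: matricize_def Finite_Cartesian_Product.vec_eq_iff)

lemma matricize_kron_mult: "matricize (kron A B *v R) = A ** matricize R ** transpose B"
proof -
  have "(kron A B *v R) $ (i, j) = (A ** matricize R ** transpose B) $ i $ j" for i j
  proof -
    have "(kron A B *v R) $ (i, j) = (\<Sum>pq\<in>UNIV \<times> UNIV. A $ i $ fst pq * B $ j $ snd pq * R $ pq)"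
      by (simp add: kron_def matrix_vector_mult_def UNIV_Times_UNIV)
    also have "\<dots> = (\<Sum>p\<in>UNIV. \<Sum>q\<in>UNIV. A $ i $ p * B $ j $ q * R $ (p, q))"
      by (simp add: sum.cartesian_product case_prod_beta)
    also have "\<dots> = (\<Sum>q\<in>UNIV. \<Sum>p\<in>UNIV. A $ i $ p * R $ (p, q) * B $ j $ q)"
      by (subst sum.swap) (simp add: mult_ac)
    also have "\<dots> = (A ** matricize R ** transpose B) $ i $ j"
      by (simp add: matrix_matrix_mult_def matricize_def transpose_def sum_distrib_right)
    finally show ?thesis .
  qed
  then show ?thesis by (simp add: matricize_def Finite_Cartesian_Product.vec_eq_iff)
qed

lemma vec_form_kron: "vec_form (kron F F *v R) x y = vec_form R (x v* F) (y v* F)"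
proof -
  have "(F ** matricize R ** transpose F) *v y = F *v (matricize R *v (y v* F))"
    by (simp only: matrix_vector_mul_assoc[symmetric] transpose_matrix_vector)
  then show ?thesis
    by (simp only: vec_form_def matricize_kron_mult dot_lmul_matrix)
qed

lemma vec_form_axis: "vec_form R (axis i 1) (axis j 1) = R $ (i, j)"
  by (simp add: vec_form_def inner_axis' matrix_vector_mult_basis column_def matricize_def)

lemma bounded_linear_vec_form_mult:
  fixes R :: "real^('k::finite \<times> 'k)"
  shows "bounded_linear (\<lambda>T. vec_form (T *v R) x y)"
proof -
  have "linear (\<lambda>T. vec_form (T *v R) x y)"
    by (intro linearI) (simp_all add: vec_form_def matrix_vector_mult_add_rdistrib inner_add_right
        matricize_add matricize_scaleR scaleR_matrix_vector_assoc[symmetric])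
  then show ?thesis by (simp add: linear_conv_bounded_linear)
qed

lemma integrable_vec_form_kron:
  assumes "integrable M (\<lambda>\<omega>. kron (F \<omega>) (F \<omega>))"
  shows "integrable M (\<lambda>\<omega>. vec_form R (x v* F \<omega>) (y v* F \<omega>))"
  using integrable_bounded_linear[OF bounded_linear_vec_form_mult assms] by (simp add: vec_form_kron)

text \<open>A bound on the operator norm of the form with respect to \<open>sqrt \<circ> q\<close>, written
  without square roots.\<close>

definition form_bounded :: "(real^'k \<Rightarrow> real) \<Rightarrow> real \<Rightarrow> real^('k \<times> 'k) \<Rightarrow> bool" where
  "form_bounded q K R \<longleftrightarrow> (\<forall>x y. \<bar>vec_form R x y\<bar> \<le> K * (q x + q y) / 2)"

lemma form_bounded_exists:
  assumes "pos_def V"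
  shows "\<exists>K\<ge>0. form_bounded (\<lambda>x. x \<bullet> (V *v x)) K R"
proof -
  obtain \<mu> where \<mu>: "\<mu> > 0" "\<And>x. \<mu> * (norm x)\<^sup>2 \<le> x \<bullet> (V *v x)"
    using pos_def_quadratic_lower_bound[OF assms] by blast
  obtain C where C: "C > 0" "\<And>x. norm (matricize R *v x) \<le> norm x * C"
    using bounded_linear.pos_bounded[OF matrix_vector_mul_bounded_linear] by blast
  have "\<bar>vec_form R x y\<bar> \<le> C / \<mu> * (x \<bullet> (V *v x) + y \<bullet> (V *v y)) / 2" for x y
  proof -
    have "\<bar>vec_form R x y\<bar> \<le> norm x * (norm y * C)"
      unfolding vec_form_def
      by (meson C(2) Cauchy_Schwarz_ineq2 mult_left_mono norm_ge_zero order_trans)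
    also have "\<dots> = C * (2 * norm x * norm y) / 2" by simp
    also have "\<dots> \<le> C * ((norm x)\<^sup>2 + (norm y)\<^sup>2) / 2"
      using C(1) sum_squares_bound[of "norm x" "norm y"] by (intro divide_right_mono mult_left_mono) auto
    also have "\<dots> \<le> C * ((x \<bullet> (V *v x) + y \<bullet> (V *v y)) / \<mu>) / 2"
      using C(1) \<mu>(1) add_mono[OF \<mu>(2)[of x] \<mu>(2)[of y]]
      by (intro divide_right_mono mult_left_mono) (auto simp: pos_le_divide_eq algebra_simps)
    finally show ?thesis by simp
  qed
  then show ?thesis
    using C(1) \<mu>(1) by (intro exI[of _ "C / \<mu>"]) (simp add: form_bounded_def)
qed

lemma form_bounded_entry:
  assumes "form_bounded q K R" and "0 \<le> K" and "\<And>i. q (axis i 1) \<le> B"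
  shows "\<bar>R $ p\<bar> \<le> K * B"
proof -
  obtain i j where p: "p = (i, j)" by fastforce
  have "\<bar>R $ p\<bar> \<le> K * (q (axis i 1) + q (axis j 1)) / 2"
    using assms(1) by (simp add: form_bounded_def p flip: vec_form_axis)
  also have "\<dots> \<le> K * (B + B) / 2"
    using assms(2,3) by (intro divide_right_mono mult_left_mono add_mono) auto
  finally show ?thesis by simp
qed

lemma form_bounded_kron_integral:
  fixes F :: "'a \<Rightarrow> real^'k^'k" and q :: "real^'k \<Rightarrow> real"
  assumes iK: "integrable M (\<lambda>\<omega>. kron (F \<omega>) (F \<omega>))"
    and iq: "\<And>x. integrable M (\<lambda>\<omega>. q (x v* F \<omega>))"
    and contraction: "\<And>x. \<alpha> * (\<integral>\<omega>. q (x v* F \<omega>) \<partial>M) \<le> c * q x"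
    and "0 \<le> \<alpha>" "0 \<le> K" and R: "form_bounded q K R"
  shows "form_bounded q (c * K) ((\<alpha> *\<^sub>R (\<integral>\<omega>. kron (F \<omega>) (F \<omega>) \<partial>M)) *v R)"
  unfolding form_bounded_def
proof (intro allI)
  fix x y
  let ?b = "\<lambda>\<omega>. vec_form R (x v* F \<omega>) (y v* F \<omega>)"
  let ?Q = "\<lambda>u. \<integral>\<omega>. q (u v* F \<omega>) \<partial>M"
  interpret vf: bounded_linear "\<lambda>T. vec_form (T *v R) x y"
    by (rule bounded_linear_vec_form_mult)
  have "vec_form ((\<alpha> *\<^sub>R (\<integral>\<omega>. kron (F \<omega>) (F \<omega>) \<partial>M)) *v R) x y = \<alpha> * (\<integral>\<omega>. ?b \<omega> \<partial>M)"
    using integral_bounded_linear[OF vf.bounded_linear iK] by (simp add: vf.scaleR vec_form_kron)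
  also have "\<bar>\<dots>\<bar> \<le> \<alpha> * (\<integral>\<omega>. K * (q (x v* F \<omega>) + q (y v* F \<omega>)) / 2 \<partial>M)"
  proof -
    have "\<bar>\<integral>\<omega>. ?b \<omega> \<partial>M\<bar> \<le> (\<integral>\<omega>. \<bar>?b \<omega>\<bar> \<partial>M)" by simp
    also have "\<dots> \<le> (\<integral>\<omega>. K * (q (x v* F \<omega>) + q (y v* F \<omega>)) / 2 \<partial>M)"
      using R iq integrable_vec_form_kron[OF iK]
      by (intro integral_mono) (auto simp: form_bounded_def)
    finally show ?thesis
      using \<open>0 \<le> \<alpha>\<close> by (simp only: abs_mult abs_of_nonneg) (rule mult_left_mono)
  qed
  also have "\<dots> = K / 2 * (\<alpha> * ?Q x + \<alpha> * ?Q y)"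
    using iq by (simp add: algebra_simps)
  also have "\<dots> \<le> K / 2 * (c * q x + c * q y)"
    using contraction \<open>0 \<le> K\<close> by (intro mult_left_mono add_mono) auto
  finally show "\<bar>vec_form ((\<alpha> *\<^sub>R (\<integral>\<omega>. kron (F \<omega>) (F \<omega>) \<partial>M)) *v R) x y\<bar>
      \<le> c * K * (q x + q y) / 2"
    by (simp add: algebra_simps)
qed

lemma Re_complex_matrix_vector_mult:
  fixes T :: "real^'n^'n" and x :: "complex^'n"
  shows "T *v (\<chi> p. Re (x $ p)) = (\<chi> p. Re (((\<chi> i j. complex_of_real (T $ i $ j)) *v x) $ p))"
  by (simp add: Finite_Cartesian_Product.vec_eq_iff matrix_vector_mult_def Re_sum)

lemma Im_complex_matrix_vector_mult:
  fixes T :: "real^'n^'n" and x :: "complex^'n"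
  shows "T *v (\<chi> p. Im (x $ p)) = (\<chi> p. Im (((\<chi> i j. complex_of_real (T $ i $ j)) *v x) $ p))"
  by (simp add: Finite_Cartesian_Product.vec_eq_iff matrix_vector_mult_def Im_sum)

text \<open>The real and imaginary parts of \<open>z\<^sup>n v\<close> are orbits of \<open>T\<close>, so they decay like \<open>c\<^sup>n\<close>;
  this rules out \<open>\<bar>z\<bar> \<ge> 1\<close>.\<close>

lemma cmod_eigenvalue_less_1_if_contraction:
  fixes T :: "real^'n^'n" and bounded :: "real \<Rightarrow> real^'n \<Rightarrow> bool"
  assumes init: "\<And>w. \<exists>K\<ge>0. bounded K w"
    and step: "\<And>K w. 0 \<le> K \<Longrightarrow> bounded K w \<Longrightarrow> bounded (c * K) (T *v w)"
    and entry: "\<And>K w p. 0 \<le> K \<Longrightarrow> bounded K w \<Longrightarrow> \<bar>w $ p\<bar> \<le> C * K"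
    and c: "0 \<le> c" "c < 1"
    and eigen: "v \<noteq> 0" "(\<chi> i j. complex_of_real (T $ i $ j)) *v v = z *s v"
  shows "cmod z < 1"
proof (rule ccontr)
  assume "\<not> cmod z < 1"
  then have z: "1 \<le> cmod z" by simp
  have power: "(\<chi> i j. complex_of_real (T $ i $ j)) *v (z ^ n *s v) = z ^ Suc n *s v" for n
    by (simp add: vector_scalar_commute eigen(2) vector_smult_assoc mult.commute)
  have decay: "\<exists>K\<ge>0. \<forall>n p. \<bar>w n $ p\<bar> \<le> C * (c ^ n * K)"
    if orbit: "\<And>n. T *v w n = w (Suc n)" for w
  proof -
    obtain K where K: "0 \<le> K" "bounded K (w 0)" using init by blast
    have "bounded (c ^ n * K) (w n)" for n
    proof (induction n)
      case (Suc n)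
      then show ?case using step[of "c ^ n * K" "w n"] K(1) c(1) by (simp add: orbit mult.assoc)
    qed (simp add: K)
    then show ?thesis using K(1) c(1) entry by (intro exI[of _ K]) auto
  qed
  define re where "re n = (\<chi> p. Re ((z ^ n *s v) $ p))" for n
  define im where "im n = (\<chi> p. Im ((z ^ n *s v) $ p))" for n
  have "T *v re n = re (Suc n)" for n
    unfolding re_def Re_complex_matrix_vector_mult power ..
  then obtain Kr where Kr: "\<And>n p. \<bar>Re ((z ^ n *s v) $ p)\<bar> \<le> C * (c ^ n * Kr)"
    using decay[of re] by (auto simp: re_def)
  have "T *v im n = im (Suc n)" for n
    unfolding im_def Im_complex_matrix_vector_mult power ..
  then obtain Ki where Ki: "\<And>n p. \<bar>Im ((z ^ n *s v) $ p)\<bar> \<le> C * (c ^ n * Ki)"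
    using decay[of im] by (auto simp: im_def)
  have "v $ p = 0" for p
  proof -
    have "cmod (v $ p) \<le> c ^ n * (C * (Kr + Ki))" for n
    proof -
      have "cmod (v $ p) \<le> cmod z ^ n * cmod (v $ p)"
        using z by (simp add: mult_le_cancel_right1 one_le_power)
      also have "\<dots> = cmod ((z ^ n *s v) $ p)" by (simp add: norm_mult norm_power)
      also have "\<dots> \<le> \<bar>Re ((z ^ n *s v) $ p)\<bar> + \<bar>Im ((z ^ n *s v) $ p)\<bar>" by (rule cmod_le)
      also have "\<dots> \<le> c ^ n * (C * (Kr + Ki))"
        using Kr[of n p] Ki[of n p] by (simp add: algebra_simps)
      finally show ?thesis .
    qed
    moreover have "(\<lambda>n. c ^ n * (C * (Kr + Ki))) \<longlonglongrightarrow> 0"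
      using c by (intro tendsto_mult_left_zero LIMSEQ_power_zero) auto
    ultimately have "cmod (v $ p) \<le> 0"
      by (intro LIMSEQ_le_const[of "\<lambda>n. c ^ n * (C * (Kr + Ki))"]) auto
    then show ?thesis by simp
  qed
  then show False using eigen(1) by (simp add: Finite_Cartesian_Product.vec_eq_iff)
qed

text \<open>Transfer to the Jordan-Normal-Form library, where the spectrum of a square complex
  matrix is known to be finite and nonempty; \<open>h\<close> enumerates the index type.\<close>

context
  fixes h :: "'n::finite \<Rightarrow> nat"
  assumes h: "bij_betw h UNIV {0..<CARD('n)}"
begin

definition jnf_vec :: "'a^'n \<Rightarrow> 'a Matrix.vec" where
  "jnf_vec v = Matrix.vec CARD('n) (\<lambda>i. v $ inv_into UNIV h i)"

definition cart_vec :: "'a Matrix.vec \<Rightarrow> 'a^'n" where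
  "cart_vec w = (\<chi> k. vec_index w (h k))"

definition jnf_mat :: "'a^'n^'n \<Rightarrow> 'a mat" where
  "jnf_mat A = Matrix.mat CARD('n) CARD('n) (\<lambda>(i, j). A $ inv_into UNIV h i $ inv_into UNIV h j)"

lemma jnf_mat_carrier [simp]: "jnf_mat A \<in> carrier_mat CARD('n) CARD('n)"
  by (simp add: jnf_mat_def)

lemma dim_row_jnf_mat [simp]: "dim_row (jnf_mat A) = CARD('n)"
  by (simp add: jnf_mat_def)

lemma cart_vec_jnf_vec [simp]: "cart_vec (jnf_vec v) = v"
proof -
  have "h k < CARD('n)" "inv_into UNIV h (h k) = k" for k
    using h by (auto simp: bij_betw_def)
  then show ?thesis by (simp add: cart_vec_def jnf_vec_def Finite_Cartesian_Product.vec_eq_iff)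
qed

lemma jnf_vec_cart_vec: "w \<in> carrier_vec CARD('n) \<Longrightarrow> jnf_vec (cart_vec w) = w"
proof (intro eq_vecI)
  fix i assume "w \<in> carrier_vec CARD('n)" "i < dim_vec w"
  then have "i < CARD('n)" by simp
  then have "h (inv_into UNIV h i) = i" using h by (simp add: bij_betw_inv_into_right)
  with \<open>i < CARD('n)\<close> show "vec_index (jnf_vec (cart_vec w)) i = vec_index w i"
    by (simp add: cart_vec_def jnf_vec_def)
qed (simp add: jnf_vec_def)

lemma jnf_vec_carrier [simp]: "jnf_vec v \<in> carrier_vec CARD('n)"
  by (simp add: jnf_vec_def)

lemma jnf_vec_eq_0_iff: "jnf_vec v = 0\<^sub>v CARD('n) \<longleftrightarrow> v = 0"
proof -
  have "jnf_vec 0 = 0\<^sub>v CARD('n)" by (intro eq_vecI) (simp_all add: jnf_vec_def)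
  then show ?thesis using cart_vec_jnf_vec by metis
qed

lemma jnf_vec_smult: "jnf_vec (z *s v) = z \<cdot>\<^sub>v jnf_vec v"
  by (intro eq_vecI) (simp_all add: jnf_vec_def)

lemma jnf_mat_mult_jnf_vec:
  fixes A :: "'a::comm_semiring_1^'n^'n"
  shows "jnf_mat A *\<^sub>v jnf_vec v = jnf_vec (A *v v)"
proof (rule eq_vecI)
  let ?g = "inv_into UNIV h"
  fix i assume "i < dim_vec (jnf_vec (A *v v))"
  then have i: "i < CARD('n)" by (simp add: jnf_vec_def)
  have "vec_index (jnf_mat A *\<^sub>v jnf_vec v) i = (\<Sum>j\<in>{0..<CARD('n)}. A $ ?g i $ ?g j * v $ ?g j)"
    using i by (simp add: jnf_mat_def jnf_vec_def scalar_prod_def)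
  also have "\<dots> = (\<Sum>k\<in>UNIV. A $ ?g i $ k * v $ k)"
    using sum.reindex_bij_betw[OF bij_betw_inv_into[OF h], of "\<lambda>k. A $ ?g i $ k * v $ k"] by simp
  finally show "vec_index (jnf_mat A *\<^sub>v jnf_vec v) i = vec_index (jnf_vec (A *v v)) i"
    using i by (simp add: jnf_vec_def matrix_vector_mult_def)
qed (simp add: jnf_mat_def jnf_vec_def)

lemma eigenvalues_eq_spectrum_jnf_mat:
  fixes A :: "'a::comm_ring_1^'n^'n"
  shows "{z. \<exists>v. v \<noteq> 0 \<and> A *v v = z *s v} = spectrum (jnf_mat A)"
proof (intro equalityI subsetI)
  fix z assume "z \<in> {z. \<exists>v. v \<noteq> 0 \<and> A *v v = z *s v}"
  then obtain v where "v \<noteq> 0" "A *v v = z *s v" by blast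
  then have "eigenvector (jnf_mat A) (jnf_vec v) z"
    by (simp add: eigenvector_def jnf_vec_eq_0_iff jnf_mat_mult_jnf_vec jnf_vec_smult)
  then show "z \<in> spectrum (jnf_mat A)" by (auto simp: spectrum_def eigenvalue_def)
next
  fix z assume "z \<in> spectrum (jnf_mat A)"
  then obtain w where "eigenvector (jnf_mat A) w z" by (auto simp: spectrum_def eigenvalue_def)
  then have w: "w \<in> carrier_vec CARD('n)" "w \<noteq> 0\<^sub>v CARD('n)" "jnf_mat A *\<^sub>v w = z \<cdot>\<^sub>v w"
    by (auto simp: eigenvector_def)
  then have "jnf_vec (A *v cart_vec w) = jnf_vec (z *s cart_vec w)"
    by (simp add: jnf_mat_mult_jnf_vec[symmetric] jnf_vec_smult jnf_vec_cart_vec)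
  then have "A *v cart_vec w = z *s cart_vec w" by (metis cart_vec_jnf_vec)
  moreover have "cart_vec w \<noteq> 0" using w jnf_vec_eq_0_iff jnf_vec_cart_vec by metis
  ultimately show "z \<in> {z. \<exists>v. v \<noteq> 0 \<and> A *v v = z *s v}" by blast
qed

end

lemma spec_rad_less:
  fixes A :: "real^'n^'n"
  assumes "\<And>z v. v \<noteq> 0 \<Longrightarrow> (\<chi> i j. complex_of_real (A $ i $ j)) *v v = z *s v \<Longrightarrow> cmod z < r"
  shows "spec_rad A < r"
proof -
  let ?A = "\<chi> i j. complex_of_real (A $ i $ j)"
  let ?E = "{z. \<exists>v. v \<noteq> 0 \<and> ?A *v v = z *s v}"
  obtain h :: "'n \<Rightarrow> nat" where h: "bij_betw h UNIV {0..<CARD('n)}"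
    using ex_bij_betw_finite_nat[of "UNIV :: 'n set"] by auto
  have E: "?E = spectrum (jnf_mat h ?A)" by (rule eigenvalues_eq_spectrum_jnf_mat[OF h])
  have carrier: "jnf_mat h ?A \<in> carrier_mat CARD('n) CARD('n)" by (rule jnf_mat_carrier[OF h])
  have "finite (cmod ` ?E)"
    unfolding E using card_finite_spectrum(1)[OF carrier] by blast
  moreover have "cmod ` ?E \<noteq> {}"
    unfolding E using spectrum_non_empty[OF carrier] by simp
  moreover have "spec_rad A = Max (cmod ` ?E)"
    unfolding spec_rad_def by (rule arg_cong[where f = Max]) blast
  ultimately show ?thesis using assms by (auto simp: Max_less_iff)
qed

lemma bounded_linear_inner_matrix_vector:
  fixes x :: "real^'m" and y :: "real^'n"
  shows "bounded_linear (\<lambda>A :: real^'n^'m. x \<bullet> (A *v y))"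
proof -
  have "linear (\<lambda>A :: real^'n^'m. x \<bullet> (A *v y))"
    by (intro linearI)
      (simp_all add: matrix_vector_mult_add_rdistrib inner_add_right scaleR_matrix_vector_assoc[symmetric])
  then show ?thesis by (simp add: linear_conv_bounded_linear)
qed

lemma fixed_point_quadratic_identity:
  fixes F :: "'a \<Rightarrow> real^'k^'k"
  assumes iF: "integrable M F"
    and V_eq: "V = lambda0 *\<^sub>R mat 1 - \<alpha> *\<^sub>R ((\<integral>\<omega>. F \<omega> \<partial>M) ** V)"
  shows "u \<bullet> (V *v u) = lambda0 * (u \<bullet> u) - \<alpha> * (\<integral>\<omega>. (u v* F \<omega>) \<bullet> (V *v u) \<partial>M)"
proof -
  let ?EF = "\<integral>\<omega>. F \<omega> \<partial>M"
  have "V *v u = (lambda0 *\<^sub>R mat 1 - \<alpha> *\<^sub>R (?EF ** V)) *v u"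
    using V_eq by (rule arg_cong)
  also have "\<dots> = lambda0 *\<^sub>R u - \<alpha> *\<^sub>R (?EF *v (V *v u))"
    by (simp only: matrix_vector_mult_diff_rdistrib scaleR_matrix_vector_assoc[symmetric]
        matrix_vector_mul_lid matrix_vector_mul_assoc)
  finally have "u \<bullet> (V *v u) = u \<bullet> (lambda0 *\<^sub>R u - \<alpha> *\<^sub>R (?EF *v (V *v u)))"
    by (rule arg_cong)
  also have "\<dots> = lambda0 * (u \<bullet> u) - \<alpha> * (u \<bullet> (?EF *v (V *v u)))"
    by (simp only: inner_diff_right inner_scaleR_right)
  also have "u \<bullet> (?EF *v (V *v u)) = (\<integral>\<omega>. u \<bullet> (F \<omega> *v (V *v u)) \<partial>M)"
    by (rule integral_bounded_linear[OF bounded_linear_inner_matrix_vector iF, symmetric])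
  finally show ?thesis by (simp only: dot_lmul_matrix)
qed

lemma mean_quadratic_contraction:
  fixes F :: "'a \<Rightarrow> real^'k^'k"
  assumes "pos_def V" "0 \<le> \<alpha>" "0 < lambda0" and iF: "integrable M F"
    and iq: "\<And>u. integrable M (\<lambda>\<omega>. (u v* F \<omega>) \<bullet> (V *v (u v* F \<omega>)))"
    and V_eq: "V = lambda0 *\<^sub>R mat 1 - \<alpha> *\<^sub>R ((\<integral>\<omega>. F \<omega> \<partial>M) ** V)"
    and pointwise: "\<And>\<omega> u. (u v* F \<omega>) \<bullet> (V *v (u v* F \<omega>)) \<le> - ((u v* F \<omega>) \<bullet> (V *v u))"
  shows "\<exists>c. 0 \<le> c \<and> c < 1 \<and>
    (\<forall>u. \<alpha> * (\<integral>\<omega>. (u v* F \<omega>) \<bullet> (V *v (u v* F \<omega>)) \<partial>M) \<le> c * (u \<bullet> (V *v u)))"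
proof -
  obtain B where B: "B > 0" "\<And>x. x \<bullet> (V *v x) \<le> B * (norm x)\<^sup>2"
    using quadratic_form_upper_bound[of V] by blast
  define B' where "B' = max B lambda0"
  have B': "0 < B'" "lambda0 \<le> B'" using B(1) by (simp_all add: B'_def)
  have quadratic_le: "x \<bullet> (V *v x) \<le> B' * (x \<bullet> x)" for x
  proof -
    have "B * (norm x)\<^sup>2 \<le> B' * (norm x)\<^sup>2" by (intro mult_right_mono) (simp_all add: B'_def)
    then show ?thesis using B(2)[of x] by (simp add: power2_norm_eq_inner)
  qed
  have "\<alpha> * (\<integral>\<omega>. (u v* F \<omega>) \<bullet> (V *v (u v* F \<omega>)) \<partial>M) \<le> (1 - lambda0 / B') * (u \<bullet> (V *v u))"
    for u
  proof -
    have "integrable M (\<lambda>\<omega>. (u v* F \<omega>) \<bullet> (V *v u))"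
      using integrable_bounded_linear[OF bounded_linear_inner_matrix_vector iF]
      by (simp add: dot_lmul_matrix)
    then have "\<alpha> * (\<integral>\<omega>. (u v* F \<omega>) \<bullet> (V *v (u v* F \<omega>)) \<partial>M)
        \<le> \<alpha> * (\<integral>\<omega>. - ((u v* F \<omega>) \<bullet> (V *v u)) \<partial>M)"
      using iq pointwise \<open>0 \<le> \<alpha>\<close> by (intro mult_left_mono integral_mono) auto
    also have "\<dots> = u \<bullet> (V *v u) - lambda0 * (u \<bullet> u)"
      using fixed_point_quadratic_identity[OF iF V_eq, of u] by simp
    also have "\<dots> \<le> (1 - lambda0 / B') * (u \<bullet> (V *v u))"
      using B'(1) mult_left_mono[OF quadratic_le[of u], of "lambda0 / B'"] \<open>0 < lambda0\<close>
      by (simp add: algebra_simps)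
    finally show ?thesis .
  qed
  moreover have "0 \<le> 1 - lambda0 / B'" "1 - lambda0 / B' < 1"
    using B' \<open>0 < lambda0\<close> by auto
  ultimately show ?thesis by blast
qed

lemma spec_rad_kron_integral_less_1:
  fixes F :: "'a \<Rightarrow> real^'k^'k"
  assumes V: "pos_def V" and "0 \<le> \<alpha>" "0 < lambda0"
    and iF: "integrable M F" and iK: "integrable M (\<lambda>\<omega>. kron (F \<omega>) (F \<omega>))"
    and V_eq: "V = lambda0 *\<^sub>R mat 1 - \<alpha> *\<^sub>R ((\<integral>\<omega>. F \<omega> \<partial>M) ** V)"
    and pointwise: "\<And>\<omega> u. (u v* F \<omega>) \<bullet> (V *v (u v* F \<omega>)) \<le> - ((u v* F \<omega>) \<bullet> (V *v u))"
  shows "spec_rad (\<alpha> *\<^sub>R (\<integral>\<omega>. kron (F \<omega>) (F \<omega>) \<partial>M)) < 1"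
proof (rule spec_rad_less)
  define q where "q x = x \<bullet> (V *v x)" for x
  have iq: "integrable M (\<lambda>\<omega>. q (u v* F \<omega>))" for u
    using integrable_vec_form_kron[OF iK, of "vectorize V" u u] by (simp add: vec_form_def q_def)
  obtain c where c: "0 \<le> c" "c < 1" and contraction: "\<And>u. \<alpha> * (\<integral>\<omega>. q (u v* F \<omega>) \<partial>M) \<le> c * q u"
    using mean_quadratic_contraction[OF V \<open>0 \<le> \<alpha>\<close> \<open>0 < lambda0\<close> iF iq[unfolded q_def] V_eq pointwise]
    by (auto simp: q_def)
  obtain B where B: "B > 0" "\<And>x. q x \<le> B * (norm x)\<^sup>2"
    using quadratic_form_upper_bound[of V] by (auto simp: q_def)
  have q_axis: "q (axis i 1) \<le> B" for i using B(2)[of "axis i 1"] by (simp add: norm_axis_1)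
  fix z v assume eigen: "v \<noteq> 0"
    "(\<chi> i j. complex_of_real ((\<alpha> *\<^sub>R (\<integral>\<omega>. kron (F \<omega>) (F \<omega>) \<partial>M)) $ i $ j)) *v v = z *s v"
  show "cmod z < 1"
  proof (rule cmod_eigenvalue_less_1_if_contraction[where bounded = "form_bounded q" and C = B])
    show "\<exists>K\<ge>0. form_bounded q K w" for w
      using form_bounded_exists[OF V] by (simp add: q_def[abs_def])
    show "form_bounded q (c * K) ((\<alpha> *\<^sub>R (\<integral>\<omega>. kron (F \<omega>) (F \<omega>) \<partial>M)) *v w)"
      if "0 \<le> K" "form_bounded q K w" for K w
      using form_bounded_kron_integral[OF iK iq contraction \<open>0 \<le> \<alpha>\<close> that] .
    show "\<bar>w $ p\<bar> \<le> B * K" if "0 \<le> K" "form_bounded q K w" for K w p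
      using form_bounded_entry[OF that(2,1) q_axis] by (simp add: mult.commute)
  qed (use c eigen in auto)
qed

theorem proposition2:
  fixes M :: "'a measure" and MY :: "'y measure"
    and G0 G :: "'a \<Rightarrow> real^'k" and Y :: "'a \<Rightarrow> 'y"
    and p0 :: "real^'k \<Rightarrow> 'y measure" and C0 :: "real^'k^'k"
    and l :: "real^'k \<Rightarrow> 'y \<Rightarrow> real"
    and \<alpha> lambda0 :: real and Cs Bs Vs :: "real^'k^'k"
  assumes P: "prob_space M"
    and alpha: "\<alpha> > 0"
    and lam: "lambda0 > 0"
    \<comment> \<open>G0 ~ N(0,I); Y | G0 ~ p0( . | G0 sqrt C0); G ~ N(0,I) independent of (Y, G0)\<close>
    and G0_gauss: "std_gauss_vec M G0"
    and G_gauss: "std_gauss_vec M G"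
    and Y_meas: "Y \<in> measurable M MY"
    and C0_psd: "psd C0"
    and p0_kernel: "p0 \<in> borel \<rightarrow>\<^sub>M prob_algebra MY"
    and Y_cond: "\<forall>A \<in> sets borel. \<forall>B \<in> sets MY.
        measure M {\<omega> \<in> space M. G0 \<omega> \<in> A \<and> Y \<omega> \<in> B}
        = (\<integral>g. indicator A g * measure (p0 (g v* mat_sqrt C0)) B \<partial>(distr M borel G0))"
    and G_indep: "\<forall>A \<in> sets borel. \<forall>B \<in> sets (MY \<Otimes>\<^sub>M borel).
        measure M {\<omega> \<in> space M. G \<omega> \<in> A \<and> (Y \<omega>, G0 \<omega>) \<in> B}
        = measure M {\<omega> \<in> space M. G \<omega> \<in> A} * measure M {\<omega> \<in> space M. (Y \<omega>, G0 \<omega>) \<in> B}"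
    \<comment> \<open>the loss: convex and twice differentiable in theta\<close>
    and l_convex: "\<forall>y. convex_on UNIV (\<lambda>\<theta>. l \<theta> y)"
    and l_twice: "\<forall>y. \<exists>l'. (\<forall>\<theta>. ((\<lambda>t. l t y) has_derivative (\<lambda>h. h \<bullet> l' \<theta>)) (at \<theta>))
                         \<and> (\<forall>\<theta>. l' differentiable (at \<theta>))"
    \<comment> \<open>fixed point equations\<close>
    and V_pos: "pos_def Vs"
    and integr:
      "integrable M (\<lambda>\<omega>. f_jac l Vs (G0 \<omega> v* Bs + G \<omega> v* mat_sqrt Cs) (Y \<omega>))"
      "integrable M (\<lambda>\<omega>. outer (G0 \<omega>) (f_fun l Vs (G0 \<omega> v* Bs + G \<omega> v* mat_sqrt Cs) (Y \<omega>)))"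
      "integrable M (\<lambda>\<omega>. outer (f_fun l Vs (G0 \<omega> v* Bs + G \<omega> v* mat_sqrt Cs) (Y \<omega>))
                               (f_fun l Vs (G0 \<omega> v* Bs + G \<omega> v* mat_sqrt Cs) (Y \<omega>)))"
      "integrable M (\<lambda>\<omega>. kron (f_jac l Vs (G0 \<omega> v* Bs + G \<omega> v* mat_sqrt Cs) (Y \<omega>))
                              (f_jac l Vs (G0 \<omega> v* Bs + G \<omega> v* mat_sqrt Cs) (Y \<omega>)))"
    and V_eq: "Vs = lambda0 *\<^sub>R mat 1
        - \<alpha> *\<^sub>R ((\<integral>\<omega>. f_jac l Vs (G0 \<omega> v* Bs + G \<omega> v* mat_sqrt Cs) (Y \<omega>) \<partial>M) ** Vs)"
    and B_eq: "Bs = (\<alpha> / lambda0) *\<^sub>R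
        ((\<integral>\<omega>. outer (G0 \<omega>) (f_fun l Vs (G0 \<omega> v* Bs + G \<omega> v* mat_sqrt Cs) (Y \<omega>)) \<partial>M) ** Vs)"
    and C_eq: "Cs = \<alpha> *\<^sub>R
        (\<integral>\<omega>. outer (f_fun l Vs (G0 \<omega> v* Bs + G \<omega> v* mat_sqrt Cs) (Y \<omega>))
                     (f_fun l Vs (G0 \<omega> v* Bs + G \<omega> v* mat_sqrt Cs) (Y \<omega>)) \<partial>M)"
  shows "spec_rad (\<alpha> *\<^sub>R
      (\<integral>\<omega>. kron (f_jac l Vs (G0 \<omega> v* Bs + G \<omega> v* mat_sqrt Cs) (Y \<omega>))
                 (f_jac l Vs (G0 \<omega> v* Bs + G \<omega> v* mat_sqrt Cs) (Y \<omega>)) \<partial>M)) < 1"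
proof (rule spec_rad_kron_integral_less_1[OF V_pos less_imp_le[OF alpha] lam integr(1) integr(4) V_eq])
  fix \<omega> u
  obtain l' where "\<And>\<theta>. ((\<lambda>t. l t (Y \<omega>)) has_derivative (\<lambda>h. h \<bullet> l' \<theta>)) (at \<theta>)"
    and "\<And>\<theta>. l' differentiable (at \<theta>)"
    using l_twice by blast
  then show "(u v* f_jac l Vs (G0 \<omega> v* Bs + G \<omega> v* mat_sqrt Cs) (Y \<omega>)) \<bullet>
      (Vs *v (u v* f_jac l Vs (G0 \<omega> v* Bs + G \<omega> v* mat_sqrt Cs) (Y \<omega>)))
    \<le> - ((u v* f_jac l Vs (G0 \<omega> v* Bs + G \<omega> v* mat_sqrt Cs) (Y \<omega>)) \<bullet> (Vs *v u))"
    using l_convex V_pos by (intro f_jac_quadratic_bound) auto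
qed

end
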